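(* Let $n\ge1$, $\alpha\in[0,n]$, and let $\Omega_1,\Omega_2\subset\mathbb{R}^n$ be disjoint Lebesgue measurable sets with $|\Omega_1|<\infty$. Let $\Gamma_t=\{x\in\Omega_1:\mathrm{dist}(x,\Omega_2)\le t\}$ and suppose there is $C_1>0$ with $|\Gamma_t|\le C_1\min\{t^{n-\alpha},1\}$ for all $t>0$. Let $J\ge0$ be a function on $\mathbb{R}^n$ with $\int_{\mathbb{R}^n}J(z)|z|^{n-\alpha}\,dz\le C_J<\infty$. Then for all $t>0$, $$\int_{\Omega_1\times\Omega_2}J\Big(\frac{x-y}{t}\Big)\,dx\,dy\le C_1C_J\,t^{2n-\alpha}.$$
   Context: $|\cdot|$ denotes Lebesgue measure. *)

theory Defs
  imports "HOL-Analysis.Analysis"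
begin

end

theory Submission
  imports Defs
begin

text \<open>For \<open>(x, y) \<in> \<Omega>1 \<times> \<Omega>2\<close> we have \<open>dist(x, \<Omega>2) \<le> |x - y|\<close>. Substituting
  \<open>y = x - t z\<close> (Jacobian \<open>t\<^sup>n\<close>) and integrating in \<open>x\<close> first, the inner integral is at most
  \<open>J(z) |\<Gamma>\<^bsub>t|z|\<^esub>| \<le> C1 J(z) (t|z|)\<^bsup>n-\<alpha>\<^esup>\<close>, and integrating in \<open>z\<close> gives \<open>C1 CJ t\<^bsup>2n-\<alpha>\<^esup>\<close>.
  Tonelli needs measurability for the Borel product, so the Lebesgue measurable data
  \<open>1\<^bsub>\<Omega>1\<^esub>\<close> and \<open>J\<close> are first replaced by Borel majorants that agree with them almost everywhere.\<close>

lemma completion_ex_borel_majorant: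
  fixes f :: "'a \<Rightarrow> ennreal"
  assumes "f \<in> borel_measurable (completion M)"
  obtains g where "g \<in> borel_measurable M" "\<And>x. x \<in> space M \<Longrightarrow> f x \<le> g x"
    "AE x in M. f x = g x"
proof -
  obtain g' where g'[measurable]: "g' \<in> borel_measurable M" and "AE x in M. f x = g' x"
    using completion_ex_borel_measurable[OF assms] by blast
  then obtain N where N: "{x \<in> space M. f x \<noteq> g' x} \<subseteq> N" "N \<in> null_sets M"
    by (auto elim!: AE_E)
  then have [measurable]: "N \<in> sets M" by auto
  show thesis
  proof
    show "(\<lambda>x. if x \<in> N then \<infinity> else g' x) \<in> borel_measurable M" by measurable
    show "f x \<le> (if x \<in> N then \<infinity> else g' x)" if "x \<in> space M" for x
      using N(1) that by auto
    show "AE x in M. f x = (if x \<in> N then \<infinity> else g' x)"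
      using AE_not_in[OF N(2)] \<open>AE x in M. f x = g' x\<close> by eventually_elim auto
  qed
qed

lemma nn_integral_lborel_affine:
  fixes f :: "'a::euclidean_space \<Rightarrow> ennreal" and c :: real
  assumes [measurable]: "f \<in> borel_measurable borel" and c: "c \<noteq> 0"
  shows "(\<integral>\<^sup>+x. f x \<partial>lborel) = ennreal (\<bar>c\<bar> ^ DIM('a)) * (\<integral>\<^sup>+x. f (t + c *\<^sub>R x) \<partial>lborel)"
  by (subst lborel_affine[OF c, of t])
     (simp add: nn_integral_density nn_integral_distr nn_integral_cmult)

lemma nn_integral_lborel_pair_shear:
  fixes h :: "'a::euclidean_space \<times> 'a \<Rightarrow> ennreal" and c :: real
  assumes [measurable]: "h \<in> borel_measurable borel" and c: "c \<noteq> 0"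
  shows "(\<integral>\<^sup>+p. h p \<partial>lborel)
    = ennreal (\<bar>c\<bar> ^ DIM('a)) * (\<integral>\<^sup>+z. \<integral>\<^sup>+x. h (x, x + c *\<^sub>R z) \<partial>lborel \<partial>lborel)"
proof -
  have "(\<lambda>(x, z). (x, x + c *\<^sub>R z)) \<in> borel_measurable (borel :: ('a \<times> 'a) measure)"
    unfolding case_prod_beta' by (intro borel_measurable_continuous_onI continuous_intros)
  from measurable_compose[OF this assms(1)]
  have [measurable]: "(\<lambda>(x, z). h (x, x + c *\<^sub>R z)) \<in> borel_measurable (lborel \<Otimes>\<^sub>M lborel)"
    by (simp add: lborel_prod case_prod_beta')
  have "(\<integral>\<^sup>+p. h p \<partial>lborel) = (\<integral>\<^sup>+x. \<integral>\<^sup>+y. h (x, y) \<partial>lborel \<partial>lborel)"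
    by (subst lborel_prod[symmetric], rule lborel.nn_integral_fst[symmetric]) (simp add: lborel_prod)
  also have "\<dots> = (\<integral>\<^sup>+x. ennreal (\<bar>c\<bar> ^ DIM('a)) * (\<integral>\<^sup>+z. h (x, x + c *\<^sub>R z) \<partial>lborel) \<partial>lborel)"
    by (intro nn_integral_cong nn_integral_lborel_affine[OF _ c]) measurable
  also have "\<dots> = ennreal (\<bar>c\<bar> ^ DIM('a)) * (\<integral>\<^sup>+x. \<integral>\<^sup>+z. h (x, x + c *\<^sub>R z) \<partial>lborel \<partial>lborel)"
    by (rule nn_integral_cmult) measurable
  also have "(\<integral>\<^sup>+x. \<integral>\<^sup>+z. h (x, x + c *\<^sub>R z) \<partial>lborel \<partial>lborel)
      = (\<integral>\<^sup>+z. \<integral>\<^sup>+x. h (x, x + c *\<^sub>R z) \<partial>lborel \<partial>lborel)"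
    by (rule lborel_pair.Fubini') measurable
  finally show ?thesis .
qed

lemma nn_integral_lborel_kernel_le_sublevel_growth:
  fixes f g :: "'a::euclidean_space \<Rightarrow> ennreal" and d :: "'a \<Rightarrow> real" and a C t :: real
  assumes [measurable]: "f \<in> borel_measurable borel" "g \<in> borel_measurable borel"
      "d \<in> borel_measurable borel"
    and t: "t > 0" and C: "C \<ge> 0"
    and sublevel: "\<And>s. s > 0 \<Longrightarrow>
      (\<integral>\<^sup>+x. f x * indicator {x. d x \<le> s} x \<partial>lborel) \<le> ennreal (C * s powr a)"
  shows "(\<integral>\<^sup>+(x, y). (if d x \<le> norm (x - y) then f x * g ((1 / t) *\<^sub>R (x - y)) else 0) \<partial>lborel)
    \<le> ennreal (C * t powr (DIM('a) + a)) * (\<integral>\<^sup>+z. g z * ennreal (norm z powr a) \<partial>lborel)"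
proof -
  let ?K = "\<lambda>z. \<integral>\<^sup>+x. (if d x \<le> t * norm z then f x * g z else 0) \<partial>lborel"
  have "(\<lambda>(x, y). if d x \<le> norm (x - y) then f x * g ((1 / t) *\<^sub>R (x - y)) else 0)
      \<in> borel_measurable borel"
    unfolding borel_prod[symmetric] by measurable
  then have shear: "(\<integral>\<^sup>+(x, y). (if d x \<le> norm (x - y) then f x * g ((1 / t) *\<^sub>R (x - y)) else 0) \<partial>lborel)
      = ennreal (t ^ DIM('a)) * (\<integral>\<^sup>+z. ?K z \<partial>lborel)"
    using t by (subst nn_integral_lborel_pair_shear[where c="-t"])
      (auto intro!: arg_cong2[where f = "(*)"] nn_integral_cong)
  have "(\<integral>\<^sup>+z. ?K z \<partial>lborel)
      \<le> (\<integral>\<^sup>+z. ennreal (C * t powr a) * (g z * ennreal (norm z powr a)) \<partial>lborel)"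
  proof (rule nn_integral_mono_AE)
    show "AE z in lborel. ?K z \<le> ennreal (C * t powr a) * (g z * ennreal (norm z powr a))"
      using AE_lborel_singleton[of 0]
    proof eventually_elim
      case (elim z)
      have "?K z = g z * (\<integral>\<^sup>+x. f x * indicator {x. d x \<le> t * norm z} x \<partial>lborel)"
        by (subst nn_integral_cmult[symmetric]) (auto intro!: nn_integral_cong simp: mult.commute)
      also have "\<dots> \<le> g z * ennreal (C * (t * norm z) powr a)"
        using elim t by (intro mult_left_mono sublevel) auto
      also have "\<dots> = ennreal (C * t powr a) * (g z * ennreal (norm z powr a))"
        using t C by (simp add: powr_mult ennreal_mult mult_ac)
      finally show ?case .
    qed
  qed
  also have "\<dots> = ennreal (C * t powr a) * (\<integral>\<^sup>+z. g z * ennreal (norm z powr a) \<partial>lborel)"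
    by (rule nn_integral_cmult) measurable
  finally have "ennreal (t ^ DIM('a)) * (\<integral>\<^sup>+z. ?K z \<partial>lborel)
      \<le> ennreal (t ^ DIM('a)) * (ennreal (C * t powr a) * (\<integral>\<^sup>+z. g z * ennreal (norm z powr a) \<partial>lborel))"
    by (rule mult_left_mono) simp
  then show ?thesis
    unfolding shear using t C by (simp add: ennreal_mult powr_add powr_realpow mult_ac)
qed

lemma nn_integral_lebesgue_kernel_le_sublevel_growth:
  fixes f g :: "'a::euclidean_space \<Rightarrow> ennreal" and d :: "'a \<Rightarrow> real" and a C M t :: real
  assumes f: "f \<in> borel_measurable lebesgue" and g: "g \<in> borel_measurable lebesgue"
    and d: "d \<in> borel_measurable borel" and t: "t > 0" and C: "C \<ge> 0"
    and sublevel: "\<And>s. s > 0 \<Longrightarrow>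
      (\<integral>\<^sup>+x. f x * indicator {x. d x \<le> s} x \<partial>lebesgue) \<le> ennreal (C * s powr a)"
    and moment: "(\<integral>\<^sup>+z. g z * ennreal (norm z powr a) \<partial>lebesgue) \<le> ennreal M"
  shows "(\<integral>\<^sup>+(x, y). (if d x \<le> norm (x - y) then f x * g ((1 / t) *\<^sub>R (x - y)) else 0) \<partial>lebesgue)
    \<le> ennreal (C * M * t powr (DIM('a) + a))"
proof -
  obtain F where F: "F \<in> borel_measurable lborel" and F_ge: "\<And>x. f x \<le> F x"
    and F_ae: "AE x in lborel. f x = F x"
    by (rule completion_ex_borel_majorant[OF f]) auto
  obtain G where G: "G \<in> borel_measurable lborel" and G_ge: "\<And>z. g z \<le> G z"
    and G_ae: "AE z in lborel. g z = G z"
    by (rule completion_ex_borel_majorant[OF g]) auto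
  have F_sublevel: "(\<integral>\<^sup>+x. F x * indicator {x. d x \<le> s} x \<partial>lborel) \<le> ennreal (C * s powr a)"
    if "s > 0" for s
    using sublevel[OF that] F_ae
    by (subst nn_integral_cong_AE[where v="\<lambda>x. f x * indicator {x. d x \<le> s} x"])
       (auto elim: eventually_mono simp: nn_integral_completion)
  have G_moment: "(\<integral>\<^sup>+z. G z * ennreal (norm z powr a) \<partial>lborel) \<le> ennreal M"
    using moment G_ae
    by (subst nn_integral_cong_AE[where v="\<lambda>z. g z * ennreal (norm z powr a)"])
       (auto elim: eventually_mono simp: nn_integral_completion)
  have "(\<integral>\<^sup>+(x, y). (if d x \<le> norm (x - y) then f x * g ((1 / t) *\<^sub>R (x - y)) else 0) \<partial>lebesgue)
      \<le> (\<integral>\<^sup>+(x, y). (if d x \<le> norm (x - y) then F x * G ((1 / t) *\<^sub>R (x - y)) else 0) \<partial>lborel)"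
    unfolding nn_integral_completion by (intro nn_integral_mono) (auto intro!: mult_mono F_ge G_ge)
  also have "\<dots> \<le> ennreal (C * t powr (DIM('a) + a)) * (\<integral>\<^sup>+z. G z * ennreal (norm z powr a) \<partial>lborel)"
    using F G d t C F_sublevel by (intro nn_integral_lborel_kernel_le_sublevel_growth) auto
  also have "\<dots> \<le> ennreal (C * t powr (DIM('a) + a)) * ennreal M"
    by (intro mult_left_mono G_moment) simp
  also have "\<dots> = ennreal (C * M * t powr (DIM('a) + a))"
    using ennreal_mult'[of "C * t powr (DIM('a) + a)" M] C by (simp add: mult_ac)
  finally show ?thesis .
qed

theorem lemma2p1:
  fixes \<Omega>1 \<Omega>2 :: "(real ^ 'n) set"
    and \<alpha> C1 CJ :: real
    and J :: "real ^ 'n \<Rightarrow> real"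
  assumes alpha: "0 \<le> \<alpha>" "\<alpha> \<le> real CARD('n)"
    and meas1: "\<Omega>1 \<in> sets lebesgue" and meas2: "\<Omega>2 \<in> sets lebesgue"
    and disj: "\<Omega>1 \<inter> \<Omega>2 = {}"
    and fin: "emeasure lebesgue \<Omega>1 < \<infinity>"
    and C1: "C1 > 0"
    and Gamma: "\<And>t. t > 0 \<Longrightarrow>
        emeasure lebesgue {x \<in> \<Omega>1. infdist x \<Omega>2 \<le> t}
          \<le> ennreal (C1 * min (t powr (real CARD('n) - \<alpha>)) 1)"
    and Jnn: "\<And>z. J z \<ge> 0"
    and Jmeas: "J \<in> borel_measurable lebesgue"
    and JCJ: "(\<integral>\<^sup>+ z. ennreal (J z * norm z powr (real CARD('n) - \<alpha>)) \<partial>lebesgue) \<le> ennreal CJ"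
  shows "\<And>t. t > 0 \<Longrightarrow>
     (\<integral>\<^sup>+ p. indicator (\<Omega>1 \<times> \<Omega>2) p * ennreal (J ((1 / t) *\<^sub>R (fst p - snd p))) \<partial>lebesgue)
       \<le> ennreal (C1 * CJ * t powr (2 * real CARD('n) - \<alpha>))"
proof -
  fix t :: real
  assume t: "t > 0"
  have infdist_meas: "(\<lambda>x. infdist x \<Omega>2) \<in> borel_measurable borel"
    by (intro borel_measurable_continuous_onI continuous_on_infdist continuous_on_id)
  have sublevel: "(\<integral>\<^sup>+x. indicator \<Omega>1 x * indicator {x. infdist x \<Omega>2 \<le> s} x \<partial>lebesgue)
      \<le> ennreal (C1 * s powr (real CARD('n) - \<alpha>))" if s: "s > 0" for s
  proof -
    have "{x \<in> \<Omega>1. infdist x \<Omega>2 \<le> s} \<in> sets lebesgue"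
      using meas1 infdist_meas by (auto simp: Collect_conj_eq Int_def[symmetric] intro: sets_completionI_sets)
    then show ?thesis
      using Gamma[OF s] C1
      by (simp add: indicator_inter_arith[symmetric] Int_def) (auto intro: order_trans ennreal_leI)
  qed
  have moment: "(\<integral>\<^sup>+z. ennreal (J z) * ennreal (norm z powr (real CARD('n) - \<alpha>)) \<partial>lebesgue)
      \<le> ennreal CJ"
    using JCJ Jnn by (simp add: ennreal_mult)
  have "(\<integral>\<^sup>+ p. indicator (\<Omega>1 \<times> \<Omega>2) p * ennreal (J ((1 / t) *\<^sub>R (fst p - snd p))) \<partial>lebesgue)
      \<le> (\<integral>\<^sup>+(x, y). (if infdist x \<Omega>2 \<le> norm (x - y)
            then indicator \<Omega>1 x * ennreal (J ((1 / t) *\<^sub>R (x - y))) else 0) \<partial>lebesgue)"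
    using infdist_le[of _ \<Omega>2] by (intro nn_integral_mono) (force simp: indicator_def dist_norm)
  also have "\<dots> \<le> ennreal (C1 * CJ * t powr (DIM(real ^ 'n) + (real CARD('n) - \<alpha>)))"
    by (rule nn_integral_lebesgue_kernel_le_sublevel_growth)
       (use meas1 Jmeas infdist_meas t C1 sublevel moment in auto)
  finally show "(\<integral>\<^sup>+ p. indicator (\<Omega>1 \<times> \<Omega>2) p * ennreal (J ((1 / t) *\<^sub>R (fst p - snd p))) \<partial>lebesgue)
      \<le> ennreal (C1 * CJ * t powr (2 * real CARD('n) - \<alpha>))"
    by (simp add: algebra_simps)
qed

end
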